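(* Let $r\geq 2$. Then there exists a constant $c_r$ such that for every $n$, the number of $r$-uniform hypergraphs on a fixed set of $n$ vertices having girth at least $5$ is at most $2^{c_r n^{3/2}}$.
   Context: Hypergraphs are simple (no repeated edges). $C_2$ denotes the graph consisting of two parallel edges between two vertices, and $C_k$ ($k\ge 3$) the cycle of length $k$. For a graph $F$, a hypergraph $H$ is a Berge-$F$ if there is a bijection $f : E(F) \to E(H)$ with $e \subseteq f(e)$ for every $e \in E(F)$. An $r$-uniform hypergraph has girth at least $5$ if it contains no subhypergraph that is a Berge-$C_k$ for any $k\in\{2,3,4\}$ (in particular any two edges share at most one vertex). *)

theory Defs
  imports Complex_Main
begin

text \<open>A hypergraph is a set of edges (so it is simple: no repeated edges).
  It is r-uniform if every edge has exactly r vertices.\<close>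
definition uniform :: "nat \<Rightarrow> 'a set set \<Rightarrow> bool" where
  "uniform r H \<longleftrightarrow> (\<forall>e\<in>H. finite e \<and> card e = r)"

text \<open>This is the unfolding of: some subhypergraph of H is a Berge copy of C_k
  (for k = 2, C_2 is the double edge between two vertices).\<close>
definition has_berge_cycle :: "'a set set \<Rightarrow> nat \<Rightarrow> bool" where
  "has_berge_cycle H k \<longleftrightarrow>
     (\<exists>v :: nat \<Rightarrow> 'a. \<exists>e :: nat \<Rightarrow> 'a set.
        inj_on v {..<k} \<and> inj_on e {..<k} \<and>
        (\<forall>i<k. e i \<in> H \<and> v i \<in> e i \<and> v ((i + 1) mod k) \<in> e i))"

definition girth_ge_5 :: "'a set set \<Rightarrow> bool" where
  "girth_ge_5 H \<longleftrightarrow> (\<forall>k\<in>{2,3,4}. \<not> has_berge_cycle H k)"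

end

theory Submission
  imports Defs "HOL-Analysis.Convex"
begin

(* The shadow graph of an r-uniform hypergraph of girth at least 5 determines the hypergraph
   (its edges are the r-cliques of the shadow), and in the shadow adjacent vertices have at most r
   and non-adjacent vertices at most one common neighbour.  So it suffices to count graphs with
   these codegree conditions.  Delete a vertex v of minimum degree delta: its neighbourhood is an
   independent set in the auxiliary graph of "cherries" (pairs joined by a path of length two but
   not by an edge) of the remaining graph.  A supersaturation count makes this auxiliary graph
   dense on every large vertex set, so the graph container method leaves only exp(O(sqrt n))
   choices for the neighbourhood.  Induction on the number of vertices gives exp(O(n^(3/2))). *)

section \<open>Berge cycles and the shadow graph\<close>

lemma has_berge_cycleI:
  assumes "length vs = k" "length es = k" "distinct vs" "distinct es" "set es \<subseteq> H"
    and "\<And>i. i < k \<Longrightarrow> vs ! i \<in> es ! i \<and> vs ! ((i + 1) mod k) \<in> es ! i"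
  shows "has_berge_cycle H k"
  unfolding has_berge_cycle_def
proof (intro exI conjI allI impI)
  show "inj_on ((!) vs) {..<k}" "inj_on ((!) es) {..<k}"
    using assms(1-4) by (auto simp: inj_on_def nth_eq_iff_index_eq)
  fix i assume "i < k"
  then show "es ! i \<in> H" "vs ! i \<in> es ! i" "vs ! ((i + 1) mod k) \<in> es ! i"
    using assms(2,5,6) nth_mem[of i es] by auto
qed

lemma girth_ge_5_edges_eq:
  assumes "girth_ge_5 H" "e \<in> H" "f \<in> H" "x \<noteq> y" "x \<in> e" "y \<in> e" "x \<in> f" "y \<in> f"
  shows "e = f"
proof (rule ccontr)
  assume "e \<noteq> f"
  then have "has_berge_cycle H 2"
    using assms by (intro has_berge_cycleI[of "[x, y]" _ "[e, f]"]) (auto simp: less_2_cases_iff)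
  with assms(1) show False unfolding girth_ge_5_def by auto
qed

lemma girth_ge_5_no_berge_triangle:
  assumes "girth_ge_5 H" "distinct [x, y, z]" "distinct [e1, e2, e3]" "{e1, e2, e3} \<subseteq> H"
    "{x, y} \<subseteq> e1" "{y, z} \<subseteq> e2" "{z, x} \<subseteq> e3"
  shows False
proof -
  have "has_berge_cycle H 3"
  proof (rule has_berge_cycleI[of "[x, y, z]" _ "[e1, e2, e3]"])
    fix i :: nat assume "i < 3"
    then consider "i = 0" | "i = 1" | "i = 2" by linarith
    then show "[x, y, z] ! i \<in> [e1, e2, e3] ! i \<and> [x, y, z] ! ((i + 1) mod 3) \<in> [e1, e2, e3] ! i"
      by cases (use assms in auto)
  qed (use assms in auto)
  with assms(1) show False unfolding girth_ge_5_def by auto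
qed

lemma girth_ge_5_no_berge_quadrilateral:
  assumes "girth_ge_5 H" "distinct [x, y, z, w]" "distinct [e1, e2, e3, e4]" "{e1, e2, e3, e4} \<subseteq> H"
    "{x, y} \<subseteq> e1" "{y, z} \<subseteq> e2" "{z, w} \<subseteq> e3" "{w, x} \<subseteq> e4"
  shows False
proof -
  have "has_berge_cycle H 4"
  proof (rule has_berge_cycleI[of "[x, y, z, w]" _ "[e1, e2, e3, e4]"])
    fix i :: nat assume "i < 4"
    then consider "i = 0" | "i = 1" | "i = 2" | "i = 3" by linarith
    then show "[x, y, z, w] ! i \<in> [e1, e2, e3, e4] ! i \<and>
        [x, y, z, w] ! ((i + 1) mod 4) \<in> [e1, e2, e3, e4] ! i"
      by cases (use assms in auto)
  qed (use assms in auto)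
  with assms(1) show False unfolding girth_ge_5_def by auto
qed

definition shadow :: "'a set set \<Rightarrow> 'a set set" where
  "shadow H = {p. card p = 2 \<and> (\<exists>e\<in>H. p \<subseteq> e)}"

definition nbhd :: "'a set set \<Rightarrow> 'a \<Rightarrow> 'a set" where
  "nbhd E x = {y. {x, y} \<in> E}"

lemma nbhd_sym: "y \<in> nbhd E x \<longleftrightarrow> x \<in> nbhd E y"
  unfolding nbhd_def by (simp add: insert_commute)

lemma doubleton_in_shadow_iff: "{x, y} \<in> shadow H \<longleftrightarrow> x \<noteq> y \<and> (\<exists>e\<in>H. x \<in> e \<and> y \<in> e)"
  unfolding shadow_def by (cases "x = y") auto

lemma mem_nbhd_shadow_iff: "y \<in> nbhd (shadow H) x \<longleftrightarrow> x \<noteq> y \<and> (\<exists>e\<in>H. x \<in> e \<and> y \<in> e)"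
  unfolding nbhd_def by (simp add: doubleton_in_shadow_iff)

lemma girth_ge_5_shadow_triangle:
  assumes g: "girth_ge_5 H" and "distinct [x, y, z]"
    and "{x, y} \<in> shadow H" "{y, z} \<in> shadow H" "{z, x} \<in> shadow H"
  obtains e where "e \<in> H" "{x, y, z} \<subseteq> e"
proof -
  obtain e1 e2 e3 where e: "{e1, e2, e3} \<subseteq> H" "{x, y} \<subseteq> e1" "{y, z} \<subseteq> e2" "{z, x} \<subseteq> e3"
    using assms(3-5) by (auto simp: doubleton_in_shadow_iff)
  have "e1 = e2 \<or> e1 = e3 \<or> e2 = e3"
    using girth_ge_5_no_berge_triangle[OF g assms(2) _ e] by auto
  then consider "{x, y, z} \<subseteq> e1" | "{x, y, z} \<subseteq> e2" using e by auto
  then show thesis using that e(1) by (metis insert_subset)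
qed

lemma girth_ge_5_shadow_codegree_adjacent:
  assumes g: "girth_ge_5 H" and u: "uniform r H" and xy: "{x, y} \<in> shadow H"
  shows "card (nbhd (shadow H) x \<inter> nbhd (shadow H) y) \<le> r"
proof -
  obtain e where e: "e \<in> H" "x \<in> e" "y \<in> e" and "x \<noteq> y"
    using xy by (auto simp: doubleton_in_shadow_iff)
  have "nbhd (shadow H) x \<inter> nbhd (shadow H) y \<subseteq> e"
  proof
    fix z assume z: "z \<in> nbhd (shadow H) x \<inter> nbhd (shadow H) y"
    then have "distinct [x, y, z]" "{y, z} \<in> shadow H" "{z, x} \<in> shadow H"
      using \<open>x \<noteq> y\<close> by (auto simp: mem_nbhd_shadow_iff doubleton_in_shadow_iff)
    then obtain f where "f \<in> H" "{x, y, z} \<subseteq> f"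
      using girth_ge_5_shadow_triangle[OF g _ xy] by blast
    then show "z \<in> e" using girth_ge_5_edges_eq[OF g e(1), of f x y] e \<open>x \<noteq> y\<close> by auto
  qed
  moreover have "finite e" "card e = r" using u e unfolding uniform_def by auto
  ultimately show ?thesis by (metis card_mono)
qed

text \<open>Two common neighbours of x and y would close a Berge 4-cycle; the degenerate cases, where
  two of its edges coincide, put x and y into a common edge.\<close>
lemma girth_ge_5_shadow_codegree_nonadjacent:
  assumes g: "girth_ge_5 H" and "x \<noteq> y" and xy: "{x, y} \<notin> shadow H"
  shows "card (nbhd (shadow H) x \<inter> nbhd (shadow H) y) \<le> 1"
proof -
  have no_edge: "\<not> (x \<in> e \<and> y \<in> e)" if "e \<in> H" for e
    using xy \<open>x \<noteq> y\<close> that by (auto simp: doubleton_in_shadow_iff)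
  have "z = z'" if z: "z \<in> nbhd (shadow H) x \<inter> nbhd (shadow H) y"
    and z': "z' \<in> nbhd (shadow H) x \<inter> nbhd (shadow H) y" for z z'
  proof (rule ccontr)
    assume "z \<noteq> z'"
    then have d: "distinct [x, z, y, z']" using z z' \<open>x \<noteq> y\<close> by (auto simp: mem_nbhd_shadow_iff)
    obtain e1 e2 e3 e4 where e: "{e1, e2, e3, e4} \<subseteq> H"
      "{x, z} \<subseteq> e1" "{z, y} \<subseteq> e2" "{y, z'} \<subseteq> e3" "{z', x} \<subseteq> e4"
      using z z' by (auto simp: mem_nbhd_shadow_iff)
    have "e1 \<noteq> e2" "e1 \<noteq> e3" "e2 \<noteq> e4" "e3 \<noteq> e4" using e no_edge by auto
    moreover have False if "e1 = e4"
    proof -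
      have "{z, y} \<in> shadow H" "{y, z'} \<in> shadow H" "{z', z} \<in> shadow H"
        using e that d by (auto simp: doubleton_in_shadow_iff)
      then obtain f where "f \<in> H" "{z, y, z'} \<subseteq> f"
        using girth_ge_5_shadow_triangle[OF g, of z y z'] d by auto
      moreover have "f = e1"
        using girth_ge_5_edges_eq[OF g, of f e1 z z'] calculation e that d by auto
      ultimately show False using no_edge e by auto
    qed
    moreover have False if "e2 = e3"
    proof -
      have "{z, x} \<in> shadow H" "{x, z'} \<in> shadow H" "{z', z} \<in> shadow H"
        using e that d by (auto simp: doubleton_in_shadow_iff)
      then obtain f where "f \<in> H" "{z, x, z'} \<subseteq> f"
        using girth_ge_5_shadow_triangle[OF g, of z x z'] d by auto
      moreover have "f = e2"
        using girth_ge_5_edges_eq[OF g, of f e2 z z'] calculation e that d by auto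
      ultimately show False using no_edge e by auto
    qed
    ultimately show False using girth_ge_5_no_berge_quadrilateral[OF g d _ e] by auto
  qed
  then show ?thesis
    by (cases "finite (nbhd (shadow H) x \<inter> nbhd (shadow H) y)") (auto simp: card_le_Suc0_iff_eq)
qed

lemma girth_ge_5_eq_shadow_cliques:
  assumes g: "girth_ge_5 H" and u: "uniform r H" and r: "r \<ge> 2"
  shows "H = {e. finite e \<and> card e = r \<and> (\<forall>x\<in>e. \<forall>y\<in>e. x \<noteq> y \<longrightarrow> {x, y} \<in> shadow H)}"
proof (intro equalityI subsetI)
  fix e assume "e \<in> H"
  then show "e \<in> {e. finite e \<and> card e = r \<and> (\<forall>x\<in>e. \<forall>y\<in>e. x \<noteq> y \<longrightarrow> {x, y} \<in> shadow H)}"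
    using u unfolding uniform_def by (auto simp: doubleton_in_shadow_iff)
next
  fix e assume "e \<in> {e. finite e \<and> card e = r \<and> (\<forall>x\<in>e. \<forall>y\<in>e. x \<noteq> y \<longrightarrow> {x, y} \<in> shadow H)}"
  then have e: "finite e" "card e = r" "\<And>x y. x \<in> e \<Longrightarrow> y \<in> e \<Longrightarrow> x \<noteq> y \<Longrightarrow> {x, y} \<in> shadow H"
    by auto
  have "\<not> card e \<le> Suc 0" using e(2) r by simp
  then obtain x y where xy: "x \<in> e" "y \<in> e" "x \<noteq> y"
    using card_le_Suc0_iff_eq[OF e(1)] by blast
  obtain f where f: "f \<in> H" "x \<in> f" "y \<in> f" using e(3)[OF xy] by (auto simp: doubleton_in_shadow_iff)
  have "e \<subseteq> f"
  proof
    fix z assume z: "z \<in> e"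
    show "z \<in> f"
    proof (cases "z = x \<or> z = y")
      case False
      then obtain h where "h \<in> H" "{x, y, z} \<subseteq> h"
        using girth_ge_5_shadow_triangle[OF g, of x y z] e(3) xy z by auto
      moreover have "h = f" using girth_ge_5_edges_eq[OF g, of h f x y] calculation f xy by auto
      ultimately show ?thesis by auto
    qed (use f in auto)
  qed
  moreover have "finite f" "card f = r" using u f unfolding uniform_def by auto
  ultimately show "e \<in> H" using e f by (metis card_subset_eq)
qed

lemma inj_on_shadow:
  fixes r :: nat
  assumes "r \<ge> 2"
  shows "inj_on shadow {H. uniform r H \<and> girth_ge_5 H}"
proof (rule inj_onI)
  fix H1 H2 :: "'a set set"
  assume "H1 \<in> {H. uniform r H \<and> girth_ge_5 H}" "H2 \<in> {H. uniform r H \<and> girth_ge_5 H}"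
    and "shadow H1 = shadow H2"
  then show "H1 = H2"
    using girth_ge_5_eq_shadow_cliques[OF _ _ assms, of H1] girth_ge_5_eq_shadow_cliques[OF _ _ assms, of H2]
    by (simp only: mem_Collect_eq)
qed

section \<open>Graphs with bounded codegrees\<close>

definition codegree_graphs :: "nat \<Rightarrow> 'a set \<Rightarrow> 'a set set set" where
  "codegree_graphs K V = {E. E \<subseteq> {p. p \<subseteq> V \<and> card p = 2} \<and>
     (\<forall>x y. x \<noteq> y \<and> {x, y} \<notin> E \<longrightarrow> card (nbhd E x \<inter> nbhd E y) \<le> 1) \<and>
     (\<forall>x y. {x, y} \<in> E \<longrightarrow> card (nbhd E x \<inter> nbhd E y) \<le> K)}"

lemma shadow_in_codegree_graphs:
  assumes "H \<subseteq> Pow V" "uniform r H" "girth_ge_5 H"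
  shows "shadow H \<in> codegree_graphs r V"
  unfolding codegree_graphs_def
proof (intro CollectI conjI allI impI)
  show "shadow H \<subseteq> {p. p \<subseteq> V \<and> card p = 2}" using assms(1) unfolding shadow_def by blast
next
  fix x y assume "x \<noteq> y \<and> {x, y} \<notin> shadow H"
  then show "card (nbhd (shadow H) x \<inter> nbhd (shadow H) y) \<le> 1"
    using girth_ge_5_shadow_codegree_nonadjacent[OF assms(3)] by blast
next
  fix x y assume "{x, y} \<in> shadow H"
  then show "card (nbhd (shadow H) x \<inter> nbhd (shadow H) y) \<le> r"
    using girth_ge_5_shadow_codegree_adjacent[OF assms(3,2)] by blast
qed

lemma finite_codegree_graphs:
  assumes "finite V"
  shows "finite (codegree_graphs K V)"
proof (rule finite_subset)
  show "codegree_graphs K V \<subseteq> Pow (Pow V)" unfolding codegree_graphs_def by auto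
qed (use assms in simp)

lemma codegree_graphs_nbhd:
  assumes "E \<in> codegree_graphs K V" "y \<in> nbhd E x"
  shows "x \<in> V" "y \<in> V" "x \<noteq> y"
proof -
  have "E \<subseteq> {p. p \<subseteq> V \<and> card p = 2}" using assms(1) unfolding codegree_graphs_def by blast
  moreover have "{x, y} \<in> E" using assms(2) unfolding nbhd_def by simp
  ultimately have "{x, y} \<subseteq> V" "card {x, y} = 2" by auto
  then show "x \<in> V" "y \<in> V" "x \<noteq> y" by (cases "x = y", auto)+
qed

lemma codegree_graphs_nbhd_subset: "E \<in> codegree_graphs K V \<Longrightarrow> nbhd E x \<subseteq> V"
  using codegree_graphs_nbhd(2) by (metis subsetI)

lemma codegree_graphs_finite_nbhd: "E \<in> codegree_graphs K V \<Longrightarrow> finite V \<Longrightarrow> finite (nbhd E x)"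
  using codegree_graphs_nbhd_subset finite_subset by metis

lemma codegree_graphs_Collect_nbhd: "E \<in> codegree_graphs K V \<Longrightarrow> {z\<in>V. x \<in> nbhd E z} = nbhd E x"
  using codegree_graphs_nbhd_subset[of E K V x] by (auto simp: nbhd_sym[of x])

section \<open>Supersaturation of cherries\<close>

lemma ex_sum_le_card_mult:
  fixes f :: "'a \<Rightarrow> nat"
  assumes "finite A" "A \<noteq> {}"
  obtains y where "y \<in> A" "(\<Sum>x\<in>A. f x) \<le> card A * f y"
proof -
  have "Max (f ` A) \<in> f ` A" using assms by (intro Max_in) auto
  then obtain y where "y \<in> A" "Max (f ` A) = f y" by (rule imageE)
  then show thesis using that sum_le_card_Max[OF assms(1), of f] by simp
qed

definition cherry_ends :: "'a set set \<Rightarrow> 'a \<Rightarrow> 'a \<Rightarrow> bool" where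
  "cherry_ends E x y \<longleftrightarrow> x \<noteq> y \<and> {x, y} \<notin> E \<and> nbhd E x \<inter> nbhd E y \<noteq> {}"

context
  fixes E :: "'a set set" and K :: nat and W A :: "'a set"
  assumes E: "E \<in> codegree_graphs K W" and finW: "finite W" and AW: "A \<subseteq> W"
begin

lemma sum_card_Int_nbhd: "(\<Sum>z\<in>W. card (A \<inter> nbhd E z)) = (\<Sum>x\<in>A. card (nbhd E x))"
proof -
  have finA: "finite A" using AW finW by (rule finite_subset)
  have "(\<Sum>z\<in>W. card (A \<inter> nbhd E z)) = (\<Sum>z\<in>W. \<Sum>x\<in>{x\<in>A. x \<in> nbhd E z}. 1::nat)"
    by (simp add: Collect_conj_eq Int_commute)
  also have "\<dots> = (\<Sum>x\<in>A. \<Sum>z\<in>{z\<in>W. x \<in> nbhd E z}. 1)"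
    by (rule sum.swap_restrict[OF finW finA])
  also have "\<dots> = (\<Sum>x\<in>A. card (nbhd E x))"
  proof (rule sum.cong[OF refl])
    fix x
    show "(\<Sum>z\<in>{z\<in>W. x \<in> nbhd E z}. 1) = card (nbhd E x)"
      using codegree_graphs_Collect_nbhd[OF E] by simp
  qed
  finally show ?thesis .
qed

lemma card_Int_nbhd_le:
  assumes "x \<in> nbhd E z"
  shows "card (A \<inter> nbhd E z) \<le> 1 + K + card {y \<in> A \<inter> nbhd E z. y \<noteq> x \<and> {x, y} \<notin> E}"
proof -
  have "A \<inter> nbhd E z \<subseteq> {x} \<union> (nbhd E x \<inter> nbhd E z) \<union> {y \<in> A \<inter> nbhd E z. y \<noteq> x \<and> {x, y} \<notin> E}"
    unfolding nbhd_def by auto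
  then have "card (A \<inter> nbhd E z)
      \<le> card ({x} \<union> (nbhd E x \<inter> nbhd E z) \<union> {y \<in> A \<inter> nbhd E z. y \<noteq> x \<and> {x, y} \<notin> E})"
    by (rule card_mono[rotated]) (simp add: codegree_graphs_finite_nbhd[OF E finW])
  also have "\<dots> \<le> 1 + card (nbhd E x \<inter> nbhd E z) + card {y \<in> A \<inter> nbhd E z. y \<noteq> x \<and> {x, y} \<notin> E}"
    using card_Un_le[of "{x} \<union> (nbhd E x \<inter> nbhd E z)" "{y \<in> A \<inter> nbhd E z. y \<noteq> x \<and> {x, y} \<notin> E}"]
      card_Un_le[of "{x}" "nbhd E x \<inter> nbhd E z"]
    by (simp only: card.empty card_insert_if finite.emptyI empty_iff if_False)
  also have "card (nbhd E x \<inter> nbhd E z) \<le> K"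
  proof -
    have "{x, z} \<in> E" using assms unfolding nbhd_def by (simp add: insert_commute)
    then show ?thesis using E unfolding codegree_graphs_def by blast
  qed
  finally show ?thesis by simp
qed

text \<open>Each non-adjacent pair has at most one common neighbour, so a cherry is counted once.\<close>
lemma sum_nonadjacent_in_nbhd_le:
  "(\<Sum>z\<in>nbhd E x. card {y \<in> A \<inter> nbhd E z. y \<noteq> x \<and> {x, y} \<notin> E}) \<le> card {y\<in>A. cherry_ends E x y}"
proof -
  define C where "C z = {y \<in> A \<inter> nbhd E z. y \<noteq> x \<and> {x, y} \<notin> E}" for z
  have finA: "finite A" using AW finW by (rule finite_subset)
  have "(\<Sum>z\<in>nbhd E x. card (C z)) = card (SIGMA z:nbhd E x. C z)"
    by (rule card_SigmaI[symmetric]) (use codegree_graphs_finite_nbhd[OF E finW] finA in \<open>auto simp: C_def\<close>)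
  also have "\<dots> \<le> card {y\<in>A. cherry_ends E x y}"
  proof (rule card_inj_on_le)
    show "inj_on snd (SIGMA z:nbhd E x. C z)"
    proof (rule inj_onI)
      fix p q assume p: "p \<in> (SIGMA z:nbhd E x. C z)" and q: "q \<in> (SIGMA z:nbhd E x. C z)"
        and "snd p = snd q"
      then obtain z z' y where pq: "p = (z, y)" "q = (z', y)" by (metis prod.collapse)
      have "z \<in> nbhd E x \<inter> nbhd E y" "z' \<in> nbhd E x \<inter> nbhd E y" "x \<noteq> y" "{x, y} \<notin> E"
        using p q unfolding pq C_def by (auto simp: nbhd_def insert_commute)
      moreover have "card (nbhd E x \<inter> nbhd E y) \<le> 1"
        using E calculation(3,4) unfolding codegree_graphs_def by blast
      ultimately have "z = z'"
        using codegree_graphs_finite_nbhd[OF E finW] card_le_Suc0_iff_eq[of "nbhd E x \<inter> nbhd E y"] by auto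
      then show "p = q" using pq by simp
    qed
    show "snd ` (SIGMA z:nbhd E x. C z) \<subseteq> {y\<in>A. cherry_ends E x y}"
      unfolding C_def cherry_ends_def by (auto simp: nbhd_def insert_commute)
  qed (use finA in simp)
  finally show ?thesis unfolding C_def .
qed

lemma sum_square_card_Int_nbhd_le:
  "(\<Sum>z\<in>W. (real (card (A \<inter> nbhd E z)))\<^sup>2)
    \<le> real ((1 + K) * (\<Sum>x\<in>A. card (nbhd E x)) + (\<Sum>x\<in>A. card {y\<in>A. cherry_ends E x y}))"
proof -
  define C where "C x z = card {y \<in> A \<inter> nbhd E z. y \<noteq> x \<and> {x, y} \<notin> E}" for x z
  have finA: "finite A" using AW finW by (rule finite_subset)
  have "(\<Sum>z\<in>W. card (A \<inter> nbhd E z) * card (A \<inter> nbhd E z))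
      \<le> (\<Sum>z\<in>W. \<Sum>x\<in>A \<inter> nbhd E z. 1 + K + C x z)"
  proof (rule sum_mono)
    fix z
    have "card (A \<inter> nbhd E z) * card (A \<inter> nbhd E z) = (\<Sum>x\<in>A \<inter> nbhd E z. card (A \<inter> nbhd E z))"
      by simp
    also have "\<dots> \<le> (\<Sum>x\<in>A \<inter> nbhd E z. 1 + K + C x z)"
      unfolding C_def by (rule sum_mono) (use card_Int_nbhd_le in blast)
    finally show "card (A \<inter> nbhd E z) * card (A \<inter> nbhd E z) \<le> (\<Sum>x\<in>A \<inter> nbhd E z. 1 + K + C x z)" .
  qed
  also have "\<dots> = (\<Sum>z\<in>W. (1 + K) * card (A \<inter> nbhd E z) + (\<Sum>x\<in>A \<inter> nbhd E z. C x z))"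
    by (simp only: sum.distrib sum_constant) (simp add: algebra_simps sum.distrib)
  also have "\<dots> = (1 + K) * (\<Sum>z\<in>W. card (A \<inter> nbhd E z)) + (\<Sum>z\<in>W. \<Sum>x\<in>{x\<in>A. x \<in> nbhd E z}. C x z)"
    by (simp only: sum.distrib sum_distrib_left Int_def)
  also have "(\<Sum>z\<in>W. \<Sum>x\<in>{x\<in>A. x \<in> nbhd E z}. C x z) = (\<Sum>x\<in>A. \<Sum>z\<in>{z\<in>W. x \<in> nbhd E z}. C x z)"
    by (rule sum.swap_restrict[OF finW finA])
  also have "\<dots> \<le> (\<Sum>x\<in>A. card {y\<in>A. cherry_ends E x y})"
  proof (rule sum_mono)
    fix x
    show "(\<Sum>z\<in>{z\<in>W. x \<in> nbhd E z}. C x z) \<le> card {y\<in>A. cherry_ends E x y}"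
      using sum_nonadjacent_in_nbhd_le codegree_graphs_Collect_nbhd[OF E] unfolding C_def by simp
  qed
  finally have "(\<Sum>z\<in>W. card (A \<inter> nbhd E z) * card (A \<inter> nbhd E z))
      \<le> (1 + K) * (\<Sum>x\<in>A. card (nbhd E x)) + (\<Sum>x\<in>A. card {y\<in>A. cherry_ends E x y})"
    by (simp add: sum_card_Int_nbhd)
  then show ?thesis unfolding power2_eq_square of_nat_mult[symmetric] of_nat_sum[symmetric] by linarith
qed

text \<open>Cauchy-Schwarz applied to the previous inequality: once the degree sum beats the codegree
  bound, most paths of length two with ends in A are cherries.\<close>
lemma sum_card_cherry_ends_ge:
  assumes "W \<noteq> {}" "1 \<le> \<delta>" and min_deg: "\<And>u. u \<in> W \<Longrightarrow> \<delta> \<le> card (nbhd E u)"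
    and big: "2 * (real K + 1) * real (card W) / real \<delta> \<le> real (card A)"
  shows "real \<delta> ^ 2 / (2 * real (card W)) * real (card A) * real (card A)
    \<le> real (\<Sum>x\<in>A. card {y\<in>A. cherry_ends E x y})"
proof -
  define m where "m = real (card W)"
  define a where "a = real (card A)"
  define D where "D = real (\<Sum>x\<in>A. card (nbhd E x))"
  define P where "P = real (\<Sum>x\<in>A. card {y\<in>A. cherry_ends E x y})"
  have m0: "0 < m" unfolding m_def using finW assms(1) by (simp add: card_gt_0_iff)
  have D_ge: "\<delta> * a \<le> D"
  proof -
    have "card A * \<delta> = (\<Sum>x\<in>A. \<delta>)" by simp
    also have "\<dots> \<le> (\<Sum>x\<in>A. card (nbhd E x))" by (rule sum_mono) (use min_deg AW in blast)
    finally have "card A * \<delta> \<le> (\<Sum>x\<in>A. card (nbhd E x))" .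
    then show ?thesis unfolding a_def D_def by (metis of_nat_le_iff of_nat_mult mult.commute)
  qed
  have "D\<^sup>2 \<le> m * (\<Sum>z\<in>W. (real (card (A \<inter> nbhd E z)))\<^sup>2)"
    using sum_squared_le_sum_of_squares[of "\<lambda>z. real (card (A \<inter> nbhd E z))" W]
    unfolding D_def m_def sum_card_Int_nbhd[symmetric] by (simp add: mult.commute)
  also have "\<dots> \<le> m * ((1 + K) * D + P)"
    using sum_square_card_Int_nbhd_le m0 unfolding D_def P_def by (intro mult_left_mono) (simp_all add: algebra_simps)
  finally have CS: "D\<^sup>2 \<le> m * ((1 + K) * D + P)" .
  have "0 \<le> D" unfolding D_def by (rule of_nat_0_le_iff)
  have "2 * (real K + 1) * m \<le> \<delta> * a"
    using big assms(2) unfolding a_def m_def by (simp add: pos_divide_le_eq mult.commute)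
  then have "m * ((1 + K) * D) \<le> D * D / 2"
    using D_ge \<open>0 \<le> D\<close> mult_right_mono[of "2 * (real K + 1) * m" D D] by (simp add: algebra_simps)
  with CS have "D * D / 2 \<le> m * P" by (simp only: power2_eq_square distrib_left)
  then have "D\<^sup>2 / (2 * m) \<le> P" using m0 by (simp add: power2_eq_square divide_le_eq mult.commute)
  moreover have "real \<delta> ^ 2 / (2 * m) * a * a \<le> D\<^sup>2 / (2 * m)"
  proof -
    have "(\<delta> * a)\<^sup>2 \<le> D\<^sup>2" using D_ge by (intro power_mono) (simp_all add: a_def)
    then have "(\<delta> * a)\<^sup>2 / (2 * m) \<le> D\<^sup>2 / (2 * m)" using m0 by (simp add: divide_right_mono)
    then show ?thesis by (simp add: power2_eq_square mult_ac)
  qed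
  ultimately show ?thesis unfolding a_def m_def P_def by linarith
qed

lemma supersaturation:
  assumes "W \<noteq> {}" "1 \<le> \<delta>" and min_deg: "\<And>u. u \<in> W \<Longrightarrow> \<delta> \<le> card (nbhd E u)"
    and big: "2 * (real K + 1) * real (card W) / real \<delta> \<le> real (card A)"
  shows "\<exists>y\<in>A. real \<delta> ^ 2 / (2 * real (card W)) * real (card A) \<le> real (card {z\<in>A. cherry_ends E y z})"
proof -
  define c where "c = real \<delta> ^ 2 / (2 * real (card W))"
  have "0 < 2 * (real K + 1) * real (card W) / real \<delta>"
    using assms(1,2) finW by (simp add: card_gt_0_iff)
  then have "0 < real (card A)" using big by linarith
  then have "A \<noteq> {}" by auto
  then obtain y where "y \<in> A"
    "(\<Sum>x\<in>A. card {z\<in>A. cherry_ends E x z}) \<le> card A * card {z\<in>A. cherry_ends E y z}"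
    using ex_sum_le_card_mult[OF finite_subset[OF AW finW]] by blast
  then have "real (\<Sum>x\<in>A. card {z\<in>A. cherry_ends E x z}) \<le> real (card A) * card {z\<in>A. cherry_ends E y z}"
    unfolding of_nat_mult[symmetric] of_nat_le_iff by simp
  then have "c * real (card A) * real (card A) \<le> real (card A) * card {z\<in>A. cherry_ends E y z}"
    using sum_card_cherry_ends_ge[OF assms] unfolding c_def by linarith
  then have "real (card A) * (c * real (card A)) \<le> real (card A) * card {z\<in>A. cherry_ends E y z}"
    by (simp add: mult_ac)
  then show ?thesis
    using mult_le_cancel_left_pos[OF \<open>0 < real (card A)\<close>] \<open>y \<in> A\<close> unfolding c_def by blast
qed

end

section \<open>Counting small subsets\<close>

lemma card_subsets_card_le_sum_binomial:
  assumes "finite U"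
  shows "card {X. X \<subseteq> U \<and> card X \<le> d} \<le> (\<Sum>j\<le>d. card U choose j)"
proof -
  have "{X. X \<subseteq> U \<and> card X \<le> d} = (\<Union>j\<in>{..d}. {X. X \<subseteq> U \<and> card X = j})" by auto
  then have "card {X. X \<subseteq> U \<and> card X \<le> d} \<le> (\<Sum>j\<le>d. card {X. X \<subseteq> U \<and> card X = j})"
    using card_UN_le[of "{..d}" "\<lambda>j. {X. X \<subseteq> U \<and> card X = j}"] by simp
  also have "\<dots> = (\<Sum>j\<le>d. card U choose j)" using n_subsets[OF assms] by simp
  finally show ?thesis .
qed

lemma sum_binomial_le_exp:
  fixes \<theta> :: real
  assumes \<theta>: "0 < \<theta>" "\<theta> \<le> 1"
  shows "real (\<Sum>j\<le>d. t choose j) \<le> exp (\<theta> * t) / \<theta> ^ d"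
proof -
  have "real (\<Sum>j\<le>d. t choose j) = (\<Sum>j\<le>d. real (t choose j))" by simp
  also have "\<dots> \<le> (\<Sum>j\<le>d. real (t choose j) * \<theta> ^ j / \<theta> ^ d)"
  proof (rule sum_mono)
    fix j assume "j \<in> {..d}"
    then have "\<theta> ^ d \<le> \<theta> ^ j" using \<theta> by (intro power_decreasing) auto
    then have "1 \<le> \<theta> ^ j / \<theta> ^ d" using \<theta> by simp
    then show "real (t choose j) \<le> real (t choose j) * \<theta> ^ j / \<theta> ^ d"
      using mult_left_mono[of 1 "\<theta> ^ j / \<theta> ^ d" "real (t choose j)"] by simp
  qed
  also have "\<dots> = (\<Sum>j\<le>d. real (t choose j) * \<theta> ^ j) / \<theta> ^ d"
    by (simp add: sum_divide_distrib)
  also have "(\<Sum>j\<le>d. real (t choose j) * \<theta> ^ j) \<le> (\<Sum>j\<le>max d t. real (t choose j) * \<theta> ^ j)"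
    by (rule sum_mono2) (use \<theta> in auto)
  also have "(\<Sum>j\<le>max d t. real (t choose j) * \<theta> ^ j) = (\<Sum>j\<le>t. real (t choose j) * \<theta> ^ j)"
    by (rule sum.mono_neutral_right) auto
  also have "\<dots> = (\<theta> + 1) ^ t" using binomial_ring[of \<theta> 1 t] by simp
  also have "\<dots> \<le> exp \<theta> ^ t"
  proof (rule power_mono)
    have "1 + \<theta> \<le> exp \<theta>" by (rule exp_ge_add_one_self)
    then show "\<theta> + 1 \<le> exp \<theta>" by linarith
    show "0 \<le> \<theta> + 1" using \<theta> by linarith
  qed
  also have "\<dots> = exp (\<theta> * t)" by (simp add: exp_of_nat_mult[symmetric] mult.commute)
  finally show ?thesis using \<theta> by (simp add: divide_right_mono)
qed

lemma card_subsets_card_le_exp: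
  fixes \<theta> :: real
  assumes "finite U" "0 < \<theta>" "\<theta> \<le> 1"
  shows "real (card {X. X \<subseteq> U \<and> card X \<le> d}) \<le> exp (\<theta> * card U) / \<theta> ^ d"
proof -
  have "real (card {X. X \<subseteq> U \<and> card X \<le> d}) \<le> real (\<Sum>j\<le>d. card U choose j)"
    using card_subsets_card_le_sum_binomial[OF assms(1), of d] by (simp only: of_nat_le_iff)
  also have "\<dots> \<le> exp (\<theta> * card U) / \<theta> ^ d" by (rule sum_binomial_le_exp[OF assms(2,3)])
  finally show ?thesis .
qed

lemma card_subsets_card_le_power:
  assumes "finite U"
  shows "card {X. X \<subseteq> U \<and> card X \<le> k} \<le> (card U + 1) ^ k"
proof -
  have "card {X. X \<subseteq> U \<and> card X \<le> k} \<le> (\<Sum>j\<le>k. card U choose j)" by (rule card_subsets_card_le_sum_binomial[OF assms])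
  also have "\<dots> \<le> (\<Sum>j\<le>k. (k choose j) * card U ^ j)"
  proof (rule sum_mono)
    fix j assume j: "j \<in> {..k}"
    have "card U choose j \<le> card U ^ j"
      by (cases "j \<le> card U") (auto simp: binomial_le_pow binomial_eq_0)
    also have "\<dots> \<le> (k choose j) * card U ^ j" using j by (simp add: Suc_leI)
    finally show "card U choose j \<le> (k choose j) * card U ^ j" .
  qed
  also have "\<dots> = (card U + 1) ^ k" using binomial_ring[of "card U" 1 k] by (simp add: mult.commute)
  finally show ?thesis .
qed

section \<open>Graph containers\<close>

definition rich_vertex :: "('a \<Rightarrow> 'a \<Rightarrow> bool) \<Rightarrow> real \<Rightarrow> 'a set \<Rightarrow> 'a" where
  "rich_vertex R \<beta> A = (SOME y. y \<in> A \<and> \<beta> * card A \<le> card {z\<in>A. R y z})"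

text \<open>One run of the container algorithm for the independent set P; n is fuel (card W steps
  suffice).  The first component is the fingerprint, the second the container.\<close>
fun container_alg ::
  "('a \<Rightarrow> 'a \<Rightarrow> bool) \<Rightarrow> real \<Rightarrow> real \<Rightarrow> 'a set \<Rightarrow> nat \<Rightarrow> 'a set \<Rightarrow> 'a set \<times> 'a set" where
  "container_alg R T \<beta> P 0 A = ({}, A)"
| "container_alg R T \<beta> P (Suc n) A = (if real (card A) < T then ({}, A) else
     (let y = rich_vertex R \<beta> A in
      if y \<in> P then
        (let r = container_alg R T \<beta> P n (A - insert y {z\<in>A. R y z}) in (insert y (fst r), snd r))
      else container_alg R T \<beta> P n (A - {y})))"

locale graph_container =
  fixes R :: "'a \<Rightarrow> 'a \<Rightarrow> bool" and T \<beta> :: real and W :: "'a set"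
  assumes finite_W: "finite W" and T_pos: "0 < T" and \<beta>_le_1: "\<beta> \<le> 1"
    and supersaturated: "\<And>A. A \<subseteq> W \<Longrightarrow> T \<le> card A \<Longrightarrow> \<exists>y\<in>A. \<beta> * card A \<le> card {z\<in>A. R y z}"
begin

lemma rich_vertex:
  assumes "A \<subseteq> W" "T \<le> card A"
  shows "rich_vertex R \<beta> A \<in> A" "\<beta> * card A \<le> card {z\<in>A. R (rich_vertex R \<beta> A) z}"
proof -
  have "\<exists>y. y \<in> A \<and> \<beta> * card A \<le> card {z\<in>A. R y z}" using supersaturated[OF assms] by blast
  from someI_ex[OF this] show "rich_vertex R \<beta> A \<in> A" "\<beta> * card A \<le> card {z\<in>A. R (rich_vertex R \<beta> A) z}"
    unfolding rich_vertex_def by auto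
qed

lemma card_Diff_rich_nbhd_le:
  assumes "A \<subseteq> W" "T \<le> card A" and y: "y = rich_vertex R \<beta> A"
  shows "real (card (A - insert y {z\<in>A. R y z})) \<le> (1 - \<beta>) * card A"
proof -
  have "finite A" using assms(1) finite_W by (rule finite_subset)
  have "y \<in> A" using rich_vertex(1)[OF assms(1,2)] y by simp
  then have "card (A - insert y {z\<in>A. R y z}) = card A - card (insert y {z\<in>A. R y z})"
    by (intro card_Diff_subset) (use \<open>finite A\<close> in auto)
  moreover have "card {z\<in>A. R y z} \<le> card (insert y {z\<in>A. R y z})" "card (insert y {z\<in>A. R y z}) \<le> card A"
    using \<open>finite A\<close> \<open>y \<in> A\<close> by (auto intro: card_mono)
  moreover have "\<beta> * card A \<le> card {z\<in>A. R y z}" using rich_vertex(2)[OF assms(1,2)] y by simp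
  ultimately show ?thesis by (simp add: of_nat_diff algebra_simps)
qed

lemma container_alg_subset:
  assumes "A \<subseteq> W"
  shows "snd (container_alg R T \<beta> P n A) \<subseteq> A" "fst (container_alg R T \<beta> P n A) \<subseteq> A \<inter> P"
proof -
  have "snd (container_alg R T \<beta> P n A) \<subseteq> A \<and> fst (container_alg R T \<beta> P n A) \<subseteq> A \<inter> P"
    using assms
  proof (induction n arbitrary: A)
    case (Suc n)
    show ?case
    proof (cases "real (card A) < T")
      case False
      define y where "y = rich_vertex R \<beta> A"
      have y: "y \<in> A" using rich_vertex(1)[OF Suc.prems] False y_def by simp
      show ?thesis
      proof (cases "y \<in> P")
        case True
        have "A - insert y {z\<in>A. R y z} \<subseteq> W" using Suc.prems by auto
        from Suc.IH[OF this] show ?thesis using False True y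
          by (simp add: Let_def y_def[symmetric]) blast
      next
        case outside: False
        have "A - {y} \<subseteq> W" using Suc.prems by auto
        from Suc.IH[OF this] show ?thesis using False outside y
          by (simp add: Let_def y_def[symmetric]) blast
      qed
    qed simp
  qed simp
  then show "snd (container_alg R T \<beta> P n A) \<subseteq> A" "fst (container_alg R T \<beta> P n A) \<subseteq> A \<inter> P"
    by simp_all
qed

lemma container_alg_small:
  assumes "A \<subseteq> W" "card A \<le> n"
  shows "real (card (snd (container_alg R T \<beta> P n A))) < T"
  using assms
proof (induction n arbitrary: A)
  case 0 then show ?case using T_pos by simp
next
  case (Suc n)
  have "finite A" using Suc.prems(1) finite_W by (rule finite_subset)
  show ?case
  proof (cases "real (card A) < T")
    case False
    define y where "y = rich_vertex R \<beta> A"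
    have y: "y \<in> A" using rich_vertex(1)[OF Suc.prems(1)] False y_def by simp
    then have "card (A - {y}) \<le> n" using \<open>finite A\<close> Suc.prems(2) by simp
    show ?thesis
    proof (cases "y \<in> P")
      case True
      have "card (A - insert y {z\<in>A. R y z}) \<le> card (A - {y})" by (rule card_mono) (use \<open>finite A\<close> in auto)
      with \<open>card (A - {y}) \<le> n\<close> Suc.IH[of "A - insert y {z\<in>A. R y z}"] show ?thesis
        using False True Suc.prems(1) by (simp add: Let_def y_def[symmetric] subset_iff)
    next
      case outside: False
      with \<open>card (A - {y}) \<le> n\<close> Suc.IH[of "A - {y}"] show ?thesis
        using False Suc.prems(1) by (simp add: Let_def y_def[symmetric] subset_iff)
    qed
  qed simp
qed

lemma container_alg_covers:
  assumes "\<And>a b. a \<in> P \<Longrightarrow> b \<in> P \<Longrightarrow> \<not> R a b" and "A \<subseteq> W"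
  shows "P \<inter> A \<subseteq> fst (container_alg R T \<beta> P n A) \<union> snd (container_alg R T \<beta> P n A)"
  using assms(2)
proof (induction n arbitrary: A)
  case (Suc n)
  show ?case
  proof (cases "real (card A) < T")
    case False
    define y where "y = rich_vertex R \<beta> A"
    show ?thesis
    proof (cases "y \<in> P")
      case True
      have "A - insert y {z\<in>A. R y z} \<subseteq> W" using Suc.prems by auto
      moreover have "P \<inter> A \<subseteq> insert y (P \<inter> (A - insert y {z\<in>A. R y z}))" using assms(1) True by auto
      ultimately show ?thesis using Suc.IH False True by (simp add: Let_def y_def[symmetric]) blast
    next
      case outside: False
      have "A - {y} \<subseteq> W" using Suc.prems by auto
      moreover have "P \<inter> A \<subseteq> P \<inter> (A - {y})" using outside by auto
      ultimately show ?thesis using Suc.IH False outside by (simp add: Let_def y_def[symmetric]) blast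
    qed
  qed simp
qed simp

lemma container_alg_determined:
  assumes "A \<subseteq> W" "fst (container_alg R T \<beta> P n A) \<subseteq> Q" "Q \<subseteq> P"
  shows "container_alg R T \<beta> Q n A = container_alg R T \<beta> P n A"
  using assms
proof (induction n arbitrary: A)
  case (Suc n)
  show ?case
  proof (cases "real (card A) < T")
    case False
    define y where "y = rich_vertex R \<beta> A"
    show ?thesis
    proof (cases "y \<in> P")
      case True
      define A' where "A' = A - insert y {z\<in>A. R y z}"
      have "fst (container_alg R T \<beta> P (Suc n) A) = insert y (fst (container_alg R T \<beta> P n A'))"
        using False True by (simp add: Let_def y_def[symmetric] A'_def)
      then have "y \<in> Q" "container_alg R T \<beta> Q n A' = container_alg R T \<beta> P n A'"
        using Suc.IH[of A'] Suc.prems unfolding A'_def by auto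
      then show ?thesis using False True by (simp add: Let_def y_def[symmetric] A'_def)
    next
      case outside: False
      have "fst (container_alg R T \<beta> P (Suc n) A) = fst (container_alg R T \<beta> P n (A - {y}))"
        using False outside by (simp add: Let_def y_def[symmetric])
      then have "y \<notin> Q" "container_alg R T \<beta> Q n (A - {y}) = container_alg R T \<beta> P n (A - {y})"
        using outside Suc.IH[of "A - {y}"] Suc.prems by auto
      then show ?thesis using False outside by (simp add: Let_def y_def[symmetric])
    qed
  qed simp
qed simp

lemma container_alg_card_fst:
  assumes "A \<subseteq> W" "card (fst (container_alg R T \<beta> P n A)) = Suc j"
  shows "T \<le> (1 - \<beta>) ^ j * card A"
  using assms
proof (induction n arbitrary: A j)
  case (Suc n)
  have "finite A" using Suc.prems(1) finite_W by (rule finite_subset)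
  show ?case
  proof (cases "real (card A) < T")
    case True then show ?thesis using Suc.prems by simp
  next
    case False
    define y where "y = rich_vertex R \<beta> A"
    show ?thesis
    proof (cases "y \<in> P")
      case True
      define A' where "A' = A - insert y {z\<in>A. R y z}"
      have "A' \<subseteq> W" using Suc.prems(1) unfolding A'_def by auto
      have "fst (container_alg R T \<beta> P (Suc n) A) = insert y (fst (container_alg R T \<beta> P n A'))"
        using False True by (simp add: Let_def y_def[symmetric] A'_def)
      moreover have "y \<notin> fst (container_alg R T \<beta> P n A')"
        using container_alg_subset(2)[OF \<open>A' \<subseteq> W\<close>] unfolding A'_def by auto
      moreover have "finite (fst (container_alg R T \<beta> P n A'))"
        using container_alg_subset(2)[OF \<open>A' \<subseteq> W\<close>] \<open>A' \<subseteq> W\<close> finite_W by (meson finite_subset le_infE)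
      ultimately have card_j: "card (fst (container_alg R T \<beta> P n A')) = j"
        using Suc.prems(2) by simp
      have shrink: "real (card A') \<le> (1 - \<beta>) * card A"
        unfolding A'_def using card_Diff_rich_nbhd_le[OF Suc.prems(1) _ y_def] False by simp
      show ?thesis
      proof (cases j)
        case 0 then show ?thesis using False by simp
      next
        case (Suc j')
        have "T \<le> (1 - \<beta>) ^ j' * card A'" using Suc.IH[OF \<open>A' \<subseteq> W\<close>, of j'] card_j Suc by simp
        also have "\<dots> \<le> (1 - \<beta>) ^ j' * ((1 - \<beta>) * card A)"
          by (rule mult_left_mono[OF shrink]) (use \<beta>_le_1 in simp)
        finally show ?thesis using Suc by (simp add: algebra_simps)
      qed
    next
      case outside: False
      have "A - {y} \<subseteq> W" using Suc.prems(1) by auto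
      have "fst (container_alg R T \<beta> P (Suc n) A) = fst (container_alg R T \<beta> P n (A - {y}))"
        using False outside by (simp add: Let_def y_def[symmetric])
      then have "T \<le> (1 - \<beta>) ^ j * card (A - {y})" using Suc.IH[OF \<open>A - {y} \<subseteq> W\<close>] Suc.prems(2) by simp
      also have "\<dots> \<le> (1 - \<beta>) ^ j * card A"
        by (rule mult_left_mono) (use \<beta>_le_1 \<open>finite A\<close> card_Diff1_le[of A y] in simp_all)
      finally show ?thesis .
    qed
  qed
qed simp

definition fingerprint :: "'a set \<Rightarrow> 'a set" where
  "fingerprint S = fst (container_alg R T \<beta> S (card W) W)"

definition container :: "'a set \<Rightarrow> 'a set" where
  "container F = snd (container_alg R T \<beta> F (card W) W)"

lemma container_subset: "container F \<subseteq> W"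
  using container_alg_subset(1)[of W F "card W"] unfolding container_def by simp

lemma card_container_less: "real (card (container F)) < T"
  using container_alg_small[of W "card W" F] unfolding container_def by simp

lemma fingerprint_subset: "fingerprint S \<subseteq> S"
  using container_alg_subset(2)[of W S "card W"] unfolding fingerprint_def by simp

text \<open>The run for S is determined by its fingerprint, so the container depends on the
  fingerprint alone.\<close>
lemma independent_subset_fingerprint_container:
  assumes "S \<subseteq> W" "\<And>a b. a \<in> S \<Longrightarrow> b \<in> S \<Longrightarrow> \<not> R a b"
  shows "S \<subseteq> fingerprint S \<union> container (fingerprint S)"
proof -
  have "container (fingerprint S) = snd (container_alg R T \<beta> S (card W) W)"
    using container_alg_determined[of W S "card W" "fingerprint S"] fingerprint_subset[of S]
    unfolding container_def fingerprint_def by simp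
  then show ?thesis
    using container_alg_covers[OF assms(2), where A=W and n="card W"] assms(1) unfolding fingerprint_def by auto
qed

lemma card_fingerprint_le:
  assumes "1 \<le> T" "0 < \<beta>"
  shows "real (card (fingerprint S)) \<le> 1 + ln (card W) / \<beta>"
proof (cases "card (fingerprint S)")
  case (Suc j)
  have "1 \<le> (1 - \<beta>) ^ j * card W"
    using container_alg_card_fst[of W S "card W" j] Suc assms(1) unfolding fingerprint_def by simp
  also have "(1 - \<beta>) ^ j \<le> exp (- \<beta>) ^ j"
    by (rule power_mono) (use exp_ge_add_one_self[of "- \<beta>"] \<beta>_le_1 in auto)
  finally have "1 \<le> exp (- (\<beta> * j)) * card W"
    by (simp add: exp_of_nat_mult[symmetric] mult.commute mult_right_mono)
  then have "exp (\<beta> * j) \<le> card W" by (simp add: exp_minus field_simps)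
  then have "\<beta> * j \<le> ln (card W)"
    by (metis exp_gt_zero exp_le_cancel_iff exp_ln less_le_trans)
  then show ?thesis using Suc assms(2) by (simp add: field_simps)
next
  case 0
  have "0 \<le> ln (card W)" by (cases "card W = 0") simp_all
  then show ?thesis using 0 assms(2) by simp
qed

lemma card_independent_sets_le:
  assumes fingerprint_le: "\<And>S. S \<subseteq> W \<Longrightarrow> (\<forall>a\<in>S. \<forall>b\<in>S. \<not> R a b) \<Longrightarrow> card (fingerprint S) \<le> k"
    and container_subsets_le: "\<And>F. real (card {X. X \<subseteq> container F \<and> card X \<le> d}) \<le> B"
  shows "real (card {S. S \<subseteq> W \<and> (\<forall>a\<in>S. \<forall>b\<in>S. \<not> R a b) \<and> card S \<le> d}) \<le> real ((card W + 1) ^ k) * B"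
proof -
  define Fs where "Fs = {F. F \<subseteq> W \<and> card F \<le> k}"
  define Xs where "Xs F = {X. X \<subseteq> container F \<and> card X \<le> d}" for F
  have cover: "{S. S \<subseteq> W \<and> (\<forall>a\<in>S. \<forall>b\<in>S. \<not> R a b) \<and> card S \<le> d} \<subseteq> (\<Union>F\<in>Fs. (\<union>) F ` Xs F)"
  proof
    fix S assume "S \<in> {S. S \<subseteq> W \<and> (\<forall>a\<in>S. \<forall>b\<in>S. \<not> R a b) \<and> card S \<le> d}"
    then have S: "S \<subseteq> W" "\<And>a b. a \<in> S \<Longrightarrow> b \<in> S \<Longrightarrow> \<not> R a b" "card S \<le> d" by auto
    have "finite S" using S(1) finite_W by (rule finite_subset)
    have "fingerprint S \<in> Fs"
      unfolding Fs_def using fingerprint_subset[of S] S fingerprint_le by auto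
    moreover have "S - fingerprint S \<in> Xs (fingerprint S)"
      unfolding Xs_def using independent_subset_fingerprint_container[OF S(1,2)] S(3)
        card_mono[OF \<open>finite S\<close>, of "S - fingerprint S"] by auto
    moreover have "S = fingerprint S \<union> (S - fingerprint S)"
      using fingerprint_subset[of S] by auto
    ultimately show "S \<in> (\<Union>F\<in>Fs. (\<union>) F ` Xs F)" by blast
  qed
  have "finite Fs" unfolding Fs_def using finite_W by simp
  have finite_Xs: "finite (Xs F)" for F
  proof -
    have "finite (container F)" using container_subset finite_W by (rule finite_subset)
    then show ?thesis unfolding Xs_def by simp
  qed
  have "card {S. S \<subseteq> W \<and> (\<forall>a\<in>S. \<forall>b\<in>S. \<not> R a b) \<and> card S \<le> d} \<le> card (\<Union>F\<in>Fs. (\<union>) F ` Xs F)"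
    using cover \<open>finite Fs\<close> finite_Xs by (intro card_mono) auto
  also have "\<dots> \<le> (\<Sum>F\<in>Fs. card ((\<union>) F ` Xs F))" by (rule card_UN_le[OF \<open>finite Fs\<close>])
  also have "\<dots> \<le> (\<Sum>F\<in>Fs. card (Xs F))" by (intro sum_mono card_image_le finite_Xs)
  finally have "real (card {S. S \<subseteq> W \<and> (\<forall>a\<in>S. \<forall>b\<in>S. \<not> R a b) \<and> card S \<le> d}) \<le> (\<Sum>F\<in>Fs. real (card (Xs F)))"
    unfolding of_nat_sum[symmetric] of_nat_le_iff .
  also have "\<dots> \<le> real (card Fs) * B" using sum_mono[of Fs _ "\<lambda>_. B"] container_subsets_le unfolding Xs_def by simp
  also have "\<dots> \<le> real ((card W + 1) ^ k) * B"
  proof (rule mult_right_mono)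
    show "real (card Fs) \<le> real ((card W + 1) ^ k)"
      unfolding of_nat_le_iff Fs_def by (rule card_subsets_card_le_power[OF finite_W])
    show "0 \<le> B" using container_subsets_le[of "{}"] of_nat_0_le_iff order_trans by blast
  qed
  finally show ?thesis .
qed

end

section \<open>Counting the neighbourhood of a vertex of minimum degree\<close>

lemma ln_power_4_le:
  fixes x :: real
  assumes "1 \<le> x"
  shows "ln x ^ 4 \<le> 256 * x"
proof -
  define y where "y = sqrt (sqrt x)"
  have "1 \<le> y" using assms unfolding y_def by simp
  have "y ^ 4 = (y\<^sup>2)\<^sup>2" by (simp flip: power_mult)
  then have "y ^ 4 = x" unfolding y_def using assms by simp
  then have "ln x = 4 * ln y" using \<open>1 \<le> y\<close> by (metis ln_realpow of_nat_numeral order.strict_trans1 zero_less_one)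
  moreover have "0 \<le> ln y" "ln y \<le> y" using \<open>1 \<le> y\<close> ln_le_minus_one[of y] by auto
  ultimately have "ln x ^ 4 \<le> 256 * y ^ 4" by (simp add: power_mono)
  then show ?thesis using \<open>y ^ 4 = x\<close> by simp
qed

lemma fingerprint_exponent_le:
  fixes L x :: real
  assumes "0 \<le> L" "1 \<le> x" "L ^ 4 \<le> 256 * x"
  shows "(1 + 2 * L + 16 * L ^ 3) * (1 + 2 * L) \<le> 14400 * x"
proof -
  have small_powers: "L ^ j \<le> 1 + L ^ 4" if "j \<le> 4" for j
  proof (cases "L \<le> 1")
    case True
    then show ?thesis using assms(1) power_le_one[of L j] zero_le_power[of L 4] by linarith
  next
    case False
    then have "L ^ j \<le> L ^ 4" using that by (intro power_increasing) auto
    then show ?thesis by simp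
  qed
  have "(1 + 2 * L + 16 * L ^ 3) * (1 + 2 * L) = 1 + 4 * L ^ 1 + 4 * L ^ 2 + 16 * L ^ 3 + 32 * L ^ 4"
    by (simp add: algebra_simps power2_eq_square power3_eq_cube power4_eq_xxxx)
  also have "\<dots> \<le> 25 + 56 * L ^ 4" using small_powers[of 1] small_powers[of 2] small_powers[of 3] by simp
  also have "\<dots> \<le> 14400 * x" using assms(2,3) by simp
  finally show ?thesis .
qed

lemma plus_one_power_le_exp_sqrt:
  fixes m :: real
  assumes "1 \<le> m" and k: "real k \<le> 1 + 2 * ln (sqrt m) + 16 * ln (sqrt m) ^ 3"
  shows "(m + 1) ^ k \<le> exp (14400 * sqrt m)"
proof -
  define L where "L = ln (sqrt m)"
  have "0 \<le> L" "1 \<le> sqrt m" using assms(1) unfolding L_def by simp_all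
  have "ln (m + 1) \<le> 1 + 2 * L"
  proof -
    have "ln (m + 1) \<le> ln (2 * m)" using assms(1) by simp
    also have "\<dots> = ln 2 + 2 * L" using assms(1) unfolding L_def by (simp add: ln_mult ln_sqrt)
    also have "ln 2 \<le> (1::real)" using ln_le_minus_one[of 2] by simp
    finally show ?thesis by simp
  qed
  have "(m + 1) ^ k = exp (real k * ln (m + 1))"
    using assms(1) by (simp add: exp_of_nat_mult)
  also have "\<dots> \<le> exp ((1 + 2 * L + 16 * L ^ 3) * (1 + 2 * L))"
    using k \<open>ln (m + 1) \<le> 1 + 2 * L\<close> \<open>0 \<le> L\<close> assms(1) unfolding L_def
    by (simp add: mult_mono)
  also have "\<dots> \<le> exp (14400 * sqrt m)"
    using fingerprint_exponent_le[OF \<open>0 \<le> L\<close> \<open>1 \<le> sqrt m\<close>] ln_power_4_le[OF \<open>1 \<le> sqrt m\<close>]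
    unfolding L_def by simp
  finally show ?thesis .
qed

lemma card_subsets_card_le_exp_sqrt:
  fixes x c :: real
  assumes "finite U" "1 \<le> \<delta>" "real d \<le> 2 * real \<delta>" "1 \<le> x" "0 \<le> c"
    and U: "real (card U) \<le> c * x\<^sup>2 / real \<delta>"
  shows "real (card {X. X \<subseteq> U \<and> card X \<le> d}) \<le> exp ((c + 2) * x)"
proof (cases "real \<delta> \<le> x")
  case True
  define \<theta> where "\<theta> = real \<delta> / x"
  have \<theta>: "0 < \<theta>" "\<theta> \<le> 1" using True assms(2,4) unfolding \<theta>_def by auto
  have "\<theta> * card U \<le> c * x"
    using U assms(2,4) mult_left_mono[OF U, of \<theta>] unfolding \<theta>_def by (simp add: power2_eq_square)
  moreover have "1 / \<theta> ^ d \<le> exp (2 * x)"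
  proof -
    have "1 / \<theta> ^ d = (x / real \<delta>) ^ d" unfolding \<theta>_def by (simp add: power_divide)
    also have "\<dots> = exp (real d * ln (x / real \<delta>))"
      using assms(2,4) by (simp add: exp_of_nat_mult)
    also have "\<dots> \<le> exp (real d * (x / real \<delta>))"
    proof -
      have "ln (x / real \<delta>) \<le> x / real \<delta>" using ln_le_minus_one[of "x / real \<delta>"] assms(2,4) by simp
      then have "real d * ln (x / real \<delta>) \<le> real d * (x / real \<delta>)" by (rule mult_left_mono) simp
      then show ?thesis by simp
    qed
    also have "\<dots> \<le> exp (2 * x)"
    proof -
      have "real d * (x / real \<delta>) \<le> 2 * real \<delta> * (x / real \<delta>)"
        by (rule mult_right_mono) (use assms(3,4) in auto)
      then show ?thesis using assms(2) by simp
    qed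
    finally show ?thesis .
  qed
  ultimately have "exp (\<theta> * card U) * (1 / \<theta> ^ d) \<le> exp (c * x) * exp (2 * x)"
    using \<theta> by (intro mult_mono) auto
  then have "exp (\<theta> * card U) / \<theta> ^ d \<le> exp ((c + 2) * x)"
    by (simp add: exp_add[symmetric] algebra_simps)
  then show ?thesis using card_subsets_card_le_exp[OF assms(1) \<theta>, of d] by linarith
next
  case False
  have "x\<^sup>2 / real \<delta> \<le> x" using False assms(4) by (simp add: power2_eq_square field_simps)
  then have "c * (x\<^sup>2 / real \<delta>) \<le> c * x" using assms(5) by (rule mult_left_mono)
  then have "real (card U) \<le> c * x" using U by simp
  then have "exp (card U) \<le> exp ((c + 2) * x)" using assms(4) by (simp add: algebra_simps)
  then show ?thesis using card_subsets_card_le_exp[OF assms(1), of 1 d] by (simp del: exp_le_cancel_iff)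
qed

lemma graph_container_cherry_ends:
  assumes E: "E \<in> codegree_graphs K W" and "finite W" "W \<noteq> {}" "1 \<le> \<delta>"
    and min_deg: "\<And>u. u \<in> W \<Longrightarrow> \<delta> \<le> card (nbhd E u)"
  shows "graph_container (cherry_ends E) (2 * (real K + 1) * real (card W) / real \<delta>)
    (min (real \<delta> ^ 2 / (2 * real (card W))) 1) W"
proof
  show "0 < 2 * (real K + 1) * real (card W) / real \<delta>"
    using assms(2-4) by (simp add: card_gt_0_iff)
  fix A assume A: "A \<subseteq> W" "2 * (real K + 1) * real (card W) / real \<delta> \<le> card A"
  then obtain y where "y \<in> A" "real \<delta> ^ 2 / (2 * real (card W)) * card A \<le> card {z\<in>A. cherry_ends E y z}"
    using supersaturation[OF E \<open>finite W\<close> A(1) \<open>W \<noteq> {}\<close> \<open>1 \<le> \<delta>\<close> min_deg] by auto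
  moreover have "min (real \<delta> ^ 2 / (2 * real (card W))) 1 * card A \<le> real \<delta> ^ 2 / (2 * real (card W)) * card A"
    by (intro mult_right_mono) simp_all
  ultimately show "\<exists>y\<in>A. min (real \<delta> ^ 2 / (2 * real (card W))) 1 * card A \<le> card {z\<in>A. cherry_ends E y z}"
    by force
qed (use \<open>finite W\<close> in auto)

lemma ln_square_div_density_le:
  fixes x :: real
  assumes "1 \<le> \<delta>" "1 \<le> x" "0 < ln x" "x < 2 * \<delta> * ln x"
  shows "ln (x\<^sup>2) / min (real \<delta> ^ 2 / (2 * x\<^sup>2)) 1 \<le> 2 * ln x + 16 * ln x ^ 3"
proof -
  define \<beta> where "\<beta> = min (real \<delta> ^ 2 / (2 * x\<^sup>2)) 1"
  have "x\<^sup>2 / (real \<delta>)\<^sup>2 < 4 * (ln x)\<^sup>2"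
  proof -
    have "(x / (2 * ln x))\<^sup>2 < (real \<delta>)\<^sup>2"
      using assms by (intro power_strict_mono) (simp_all add: field_simps)
    then show ?thesis using assms(1,3) by (simp add: power_divide field_simps)
  qed
  then have "1 / \<beta> \<le> 1 + 8 * (ln x)\<^sup>2"
  proof (cases "real \<delta> ^ 2 / (2 * x\<^sup>2) \<le> 1")
    case True
    then have "1 / \<beta> = 2 * (x\<^sup>2 / (real \<delta>)\<^sup>2)" unfolding \<beta>_def by simp
    with \<open>x\<^sup>2 / (real \<delta>)\<^sup>2 < 4 * (ln x)\<^sup>2\<close> show ?thesis by simp
  qed (simp add: \<beta>_def)
  then have "2 * ln x * (1 / \<beta>) \<le> 2 * ln x * (1 + 8 * (ln x)\<^sup>2)"
    using assms(3) by (intro mult_left_mono) simp_all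
  moreover have "ln (x\<^sup>2) = 2 * ln x" using assms(2) by (simp add: ln_realpow)
  ultimately show ?thesis unfolding \<beta>_def[symmetric] by (simp add: algebra_simps power2_eq_square power3_eq_cube)
qed

text \<open>Here the minimum degree is large, so the containers are small and few fingerprints suffice.\<close>
lemma card_cherry_free_sets_le:
  assumes E: "E \<in> codegree_graphs K W" and "finite W"
    and min_deg: "\<And>u. u \<in> W \<Longrightarrow> \<delta> \<le> card (nbhd E u)"
    and large_deg: "sqrt (card W) < real (\<delta> + 1) * ln (sqrt (card W))"
  shows "real (card {S. S \<subseteq> W \<and> (\<forall>a\<in>S. \<forall>b\<in>S. \<not> cherry_ends E a b) \<and> card S \<le> \<delta> + 1})
    \<le> exp ((14404 + 2 * real K) * sqrt (card W))"
proof -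
  define m where "m = real (card W)"
  define x where "x = sqrt m"
  define L where "L = ln x"
  have "W \<noteq> {}" using large_deg by auto
  then have "1 \<le> m" unfolding m_def using \<open>finite W\<close> by (simp add: Suc_le_eq card_gt_0_iff)
  then have "1 \<le> x" "x\<^sup>2 = m" "0 \<le> L" unfolding x_def L_def by simp_all
  have "L < x" unfolding L_def using ln_less_self[of x] \<open>1 \<le> x\<close> by simp
  then have "1 \<le> \<delta>" using large_deg unfolding x_def L_def m_def by (cases \<delta>) auto
  then have "x < 2 * real \<delta> * L"
    using large_deg \<open>0 \<le> L\<close> mult_right_mono[of "real (\<delta> + 1)" "2 * \<delta>" L]
    unfolding x_def L_def m_def by linarith
  then have "0 < L" using \<open>1 \<le> x\<close> by (smt (verit) mult_nonneg_nonpos of_nat_0_le_iff)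
  obtain u where "u \<in> W" using \<open>W \<noteq> {}\<close> by blast
  then have "\<delta> \<le> card W"
    using le_trans[OF min_deg card_mono[OF \<open>finite W\<close> codegree_graphs_nbhd_subset[OF E, of u]]] by blast
  define \<beta> where "\<beta> = min (real \<delta> ^ 2 / (2 * m)) 1"
  define T where "T = 2 * (real K + 1) * m / \<delta>"
  have "0 < \<beta>" unfolding \<beta>_def using \<open>1 \<le> \<delta>\<close> \<open>1 \<le> m\<close> by simp
  have "m \<le> 2 * (real K + 1) * m" using \<open>1 \<le> m\<close> by simp
  then have "real \<delta> \<le> 2 * (real K + 1) * m" using \<open>\<delta> \<le> card W\<close> unfolding m_def by linarith
  then have "1 \<le> T" unfolding T_def using \<open>1 \<le> \<delta>\<close> by simp
  interpret graph_container "cherry_ends E" T \<beta> W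
    unfolding T_def \<beta>_def m_def
    by (rule graph_container_cherry_ends[OF E \<open>finite W\<close> \<open>W \<noteq> {}\<close> \<open>1 \<le> \<delta>\<close>]) (rule min_deg)
  define k where "k = nat \<lfloor>1 + 2 * L + 16 * L ^ 3\<rfloor>"
  have k: "real k \<le> 1 + 2 * L + 16 * L ^ 3" unfolding k_def using \<open>0 \<le> L\<close> by simp
  have "card (fingerprint S) \<le> k" for S
  proof -
    have "ln m / \<beta> \<le> 2 * L + 16 * L ^ 3"
      using ln_square_div_density_le[OF \<open>1 \<le> \<delta>\<close> \<open>1 \<le> x\<close>] \<open>0 < L\<close> \<open>x < 2 * real \<delta> * L\<close>
      unfolding \<beta>_def L_def \<open>x\<^sup>2 = m\<close>[symmetric] by simp
    then have "real (card (fingerprint S)) \<le> 1 + 2 * L + 16 * L ^ 3"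
      using card_fingerprint_le[OF \<open>1 \<le> T\<close> \<open>0 < \<beta>\<close>, of S] unfolding m_def by linarith
    then show ?thesis unfolding k_def by linarith
  qed
  moreover have "real (card {X. X \<subseteq> container F \<and> card X \<le> \<delta> + 1}) \<le> exp ((2 * real K + 4) * x)" for F
  proof -
    have "real (card (container F)) \<le> 2 * (real K + 1) * x\<^sup>2 / real \<delta>"
      using card_container_less[of F] \<open>x\<^sup>2 = m\<close> unfolding T_def by simp
    from card_subsets_card_le_exp_sqrt[OF _ \<open>1 \<le> \<delta>\<close> _ \<open>1 \<le> x\<close> _ this]
    show ?thesis using container_subset finite_subset[OF _ \<open>finite W\<close>] \<open>1 \<le> \<delta>\<close>
      by (simp add: algebra_simps)
  qed
  ultimately have "real (card {S. S \<subseteq> W \<and> (\<forall>a\<in>S. \<forall>b\<in>S. \<not> cherry_ends E a b) \<and> card S \<le> \<delta> + 1})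
      \<le> (m + 1) ^ k * exp ((2 * real K + 4) * x)"
    using card_independent_sets_le[of k "\<delta> + 1"] unfolding m_def by (simp add: add.commute)
  also have "\<dots> \<le> exp (14400 * x) * exp ((2 * real K + 4) * x)"
    using plus_one_power_le_exp_sqrt[OF \<open>1 \<le> m\<close> k[unfolded L_def x_def]] unfolding x_def
    by (intro mult_right_mono) simp_all
  also have "\<dots> = exp ((14404 + 2 * real K) * sqrt (card W))"
    unfolding x_def m_def by (simp add: exp_add[symmetric] algebra_simps)
  finally show ?thesis .
qed

text \<open>The sets that can occur as the neighbourhood of a vertex of minimum degree added to E.\<close>
definition possible_links :: "'a set set \<Rightarrow> 'a set \<Rightarrow> 'a set set" where
  "possible_links E W = {S. S \<subseteq> W \<and> (\<forall>x\<in>S. \<forall>y\<in>S. \<not> cherry_ends E x y) \<and> (\<forall>u\<in>W. card S \<le> card (nbhd E u) + 1)}"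

lemma card_possible_links_le:
  assumes E: "E \<in> codegree_graphs K W" and "finite W"
  shows "real (card (possible_links E W)) \<le> exp ((14404 + 2 * real K) * sqrt (card W))"
proof (cases "W = {}")
  case True
  then have "possible_links E W = {{}}" unfolding possible_links_def by auto
  then show ?thesis by simp
next
  case False
  define v where "v = arg_min_on (\<lambda>u. card (nbhd E u)) W"
  define \<delta> where "\<delta> = card (nbhd E v)"
  have "v \<in> W" unfolding v_def using arg_min_if_finite(1)[OF \<open>finite W\<close> False] .
  have min_deg: "\<And>u. u \<in> W \<Longrightarrow> \<delta> \<le> card (nbhd E u)"
    unfolding \<delta>_def v_def using arg_min_least[OF \<open>finite W\<close> False] .
  define LS where "LS = {S. S \<subseteq> W \<and> (\<forall>a\<in>S. \<forall>b\<in>S. \<not> cherry_ends E a b) \<and> card S \<le> \<delta> + 1}"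
  have "possible_links E W \<subseteq> LS"
    unfolding possible_links_def LS_def using \<open>v \<in> W\<close> unfolding \<delta>_def by fastforce
  then have "real (card (possible_links E W)) \<le> real (card LS)"
    unfolding LS_def using \<open>finite W\<close> by (simp add: card_mono)
  also have "\<dots> \<le> exp ((14404 + 2 * real K) * sqrt (card W))"
  proof (cases "real (\<delta> + 1) * ln (sqrt (card W)) \<le> sqrt (card W)")
    case True
    define x where "x = sqrt (card W)"
    have "1 \<le> x" unfolding x_def using False \<open>finite W\<close> by (simp add: Suc_le_eq card_gt_0_iff)
    have "LS \<subseteq> {S. S \<subseteq> W \<and> card S \<le> \<delta> + 1}" unfolding LS_def by auto
    then have "real (card LS) \<le> real (card {S. S \<subseteq> W \<and> card S \<le> \<delta> + 1})"
      using \<open>finite W\<close> by (simp add: card_mono)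
    also have "\<dots> \<le> exp ((1 / x) * card W) / (1 / x) ^ (\<delta> + 1)"
      by (rule card_subsets_card_le_exp[OF \<open>finite W\<close>]) (use \<open>1 \<le> x\<close> in auto)
    also have "\<dots> = exp (x + real (\<delta> + 1) * ln x)"
      using \<open>1 \<le> x\<close> unfolding x_def by (simp add: exp_add exp_of_nat_mult power_one_over field_simps)
    also have "\<dots> \<le> exp ((14404 + 2 * real K) * x)"
    proof -
      have "2 * x \<le> (14404 + 2 * real K) * x" using \<open>1 \<le> x\<close> by (intro mult_right_mono) auto
      then show ?thesis using True unfolding x_def by simp
    qed
    finally show ?thesis unfolding x_def .
  next
    case False
    then show ?thesis
      unfolding LS_def using card_cherry_free_sets_le[OF E \<open>finite W\<close> min_deg] by simp
  qed
  finally show ?thesis .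
qed

section \<open>Counting graphs with bounded codegrees\<close>

definition attach_vertex :: "'a \<Rightarrow> 'a set set \<Rightarrow> 'a set \<Rightarrow> 'a set set" where
  "attach_vertex v E S = E \<union> (\<lambda>s. {v, s}) ` S"

lemma attach_vertex_delete:
  assumes "E \<in> codegree_graphs K V"
  shows "attach_vertex v {p\<in>E. v \<notin> p} (nbhd E v) = E"
proof
  show "attach_vertex v {p\<in>E. v \<notin> p} (nbhd E v) \<subseteq> E" unfolding attach_vertex_def nbhd_def by auto
  show "E \<subseteq> attach_vertex v {p\<in>E. v \<notin> p} (nbhd E v)"
  proof
    fix p assume "p \<in> E"
    show "p \<in> attach_vertex v {p\<in>E. v \<notin> p} (nbhd E v)"
    proof (cases "v \<in> p")
      case True
      have "card p = 2" using assms \<open>p \<in> E\<close> unfolding codegree_graphs_def by auto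
      then obtain a b where "p = {a, b}" by (meson card_2_iff)
      then have "p = {v, if a = v then b else a}" using True by auto
      then show ?thesis using \<open>p \<in> E\<close> unfolding attach_vertex_def nbhd_def by auto
    qed (use \<open>p \<in> E\<close> in \<open>auto simp: attach_vertex_def\<close>)
  qed
qed

lemma nbhd_delete_vertex_subset: "nbhd {p\<in>E. v \<notin> p} x \<subseteq> nbhd E x"
  unfolding nbhd_def by auto

lemma codegree_graphs_delete_vertex:
  assumes E: "E \<in> codegree_graphs K V" and "finite V"
  shows "{p\<in>E. v \<notin> p} \<in> codegree_graphs K (V - {v})"
proof -
  define E' where "E' = {p\<in>E. v \<notin> p}"
  have "finite (nbhd E x)" for x using codegree_graphs_finite_nbhd[OF E \<open>finite V\<close>] .
  then have common_le: "card (nbhd E' x \<inter> nbhd E' y) \<le> card (nbhd E x \<inter> nbhd E y)" for x y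
    unfolding E'_def using nbhd_delete_vertex_subset[of E v x] nbhd_delete_vertex_subset[of E v y]
    by (intro card_mono) auto
  have "card (nbhd E' x \<inter> nbhd E' y) \<le> 1" if "x \<noteq> y" "{x, y} \<notin> E'" for x y
  proof (cases "{x, y} \<in> E")
    case False
    then have "card (nbhd E x \<inter> nbhd E y) \<le> 1" using E that(1) unfolding codegree_graphs_def by blast
    then show ?thesis using common_le[of x y] by linarith
  next
    case True
    then have "v = x \<or> v = y" using that(2) unfolding E'_def by auto
    moreover have "nbhd E' v = {}" unfolding nbhd_def E'_def by auto
    ultimately show ?thesis by auto
  qed
  moreover have "card (nbhd E' x \<inter> nbhd E' y) \<le> K" if "{x, y} \<in> E'" for x y
  proof -
    have "card (nbhd E x \<inter> nbhd E y) \<le> K" using E that unfolding codegree_graphs_def E'_def by blast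
    then show ?thesis using common_le[of x y] by linarith
  qed
  moreover have "E' \<subseteq> {p. p \<subseteq> V - {v} \<and> card p = 2}" using E unfolding codegree_graphs_def E'_def by auto
  ultimately show ?thesis unfolding codegree_graphs_def E'_def by blast
qed

text \<open>Two neighbours of v already share the neighbour v, so by the codegree condition they cannot
  form a cherry in E minus v; minimality of the degree of v gives the size bound.\<close>
lemma nbhd_min_degree_in_possible_links:
  assumes E: "E \<in> codegree_graphs K V" and "finite V"
    and min_deg: "\<And>u. u \<in> V \<Longrightarrow> card (nbhd E v) \<le> card (nbhd E u)"
  shows "nbhd E v \<in> possible_links {p\<in>E. v \<notin> p} (V - {v})"
proof -
  define E' where "E' = {p\<in>E. v \<notin> p}"
  have fin: "finite (nbhd E x)" for x using codegree_graphs_finite_nbhd[OF E \<open>finite V\<close>] .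
  have "\<not> cherry_ends E' x y" if x: "x \<in> nbhd E v" and y: "y \<in> nbhd E v" for x y
  proof
    assume "cherry_ends E' x y"
    then obtain z where z: "z \<in> nbhd E' x" "z \<in> nbhd E' y" and xy: "x \<noteq> y" "{x, y} \<notin> E'"
      unfolding cherry_ends_def by auto
    have "z \<noteq> v" using z(1) unfolding nbhd_def E'_def by auto
    have "x \<noteq> v" "y \<noteq> v" using codegree_graphs_nbhd(3)[OF E x] codegree_graphs_nbhd(3)[OF E y] by auto
    then have "{x, y} \<notin> E" using xy(2) unfolding E'_def by auto
    then have "card (nbhd E x \<inter> nbhd E y) \<le> 1" using E xy(1) unfolding codegree_graphs_def by blast
    moreover have "{v, z} \<subseteq> nbhd E x \<inter> nbhd E y"
      using x y z nbhd_delete_vertex_subset[of E v] unfolding E'_def by (auto simp: nbhd_def insert_commute)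
    then have "2 \<le> card (nbhd E x \<inter> nbhd E y)"
      using card_mono[of "nbhd E x \<inter> nbhd E y" "{v, z}"] fin \<open>z \<noteq> v\<close> by auto
    ultimately show False by simp
  qed
  moreover have "card (nbhd E v) \<le> card (nbhd E' u) + 1" if "u \<in> V - {v}" for u
  proof -
    have "nbhd E u \<subseteq> insert v (nbhd E' u)" unfolding nbhd_def E'_def using that by auto
    then have "card (nbhd E u) \<le> card (insert v (nbhd E' u))"
      using fin[of u] nbhd_delete_vertex_subset[of E v u] unfolding E'_def
      by (intro card_mono) (auto intro: finite_subset)
    also have "\<dots> \<le> card (nbhd E' u) + 1"
      using finite_subset[OF nbhd_delete_vertex_subset fin] unfolding E'_def by (simp add: card_insert_if)
    finally show ?thesis using min_deg[of u] that by simp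
  qed
  moreover have "nbhd E v \<subseteq> V - {v}" using codegree_graphs_nbhd[OF E] by blast
  ultimately show ?thesis unfolding possible_links_def E'_def by blast
qed

lemma card_codegree_graphs_le_sum_links:
  assumes "finite V" "V \<noteq> {}"
  shows "card (codegree_graphs K V)
    \<le> (\<Sum>v\<in>V. \<Sum>E'\<in>codegree_graphs K (V - {v}). card (possible_links E' (V - {v})))"
proof -
  define Sg where "Sg = (SIGMA v:V. SIGMA E':codegree_graphs K (V - {v}). possible_links E' (V - {v}))"
  have finite_links: "finite (possible_links E' W)" if "finite W" for E' :: "'a set set" and W
    using that unfolding possible_links_def by simp
  have "codegree_graphs K V \<subseteq> (\<lambda>(v, E', S). attach_vertex v E' S) ` Sg"
  proof
    fix E assume E: "E \<in> codegree_graphs K V"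
    define v where "v = arg_min_on (\<lambda>u. card (nbhd E u)) V"
    have "v \<in> V" unfolding v_def using arg_min_if_finite(1)[OF assms] .
    have "card (nbhd E v) \<le> card (nbhd E u)" if "u \<in> V" for u
      unfolding v_def using arg_min_least[OF assms that] .
    then have "(v, {p\<in>E. v \<notin> p}, nbhd E v) \<in> Sg"
      unfolding Sg_def using \<open>v \<in> V\<close> codegree_graphs_delete_vertex[OF E assms(1)]
        nbhd_min_degree_in_possible_links[OF E assms(1)] by simp
    then show "E \<in> (\<lambda>(v, E', S). attach_vertex v E' S) ` Sg" using attach_vertex_delete[OF E, of v] by force
  qed
  moreover have "finite Sg"
    unfolding Sg_def using assms(1) by (auto intro!: finite_SigmaI finite_codegree_graphs finite_links)
  ultimately have "card (codegree_graphs K V) \<le> card Sg" by (intro surj_card_le)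
  also have "card Sg = (\<Sum>v\<in>V. card (SIGMA E':codegree_graphs K (V - {v}). possible_links E' (V - {v})))"
    unfolding Sg_def using assms(1)
    by (intro card_SigmaI) (auto intro!: finite_SigmaI finite_codegree_graphs finite_links)
  also have "\<dots> = (\<Sum>v\<in>V. \<Sum>E'\<in>codegree_graphs K (V - {v}). card (possible_links E' (V - {v})))"
    using assms(1) by (intro sum.cong refl card_SigmaI) (auto intro!: finite_codegree_graphs finite_links)
  finally show ?thesis .
qed

lemma plus_one_le_exp_two_sqrt: "real n + 1 \<le> exp (2 * sqrt (real n))"
proof -
  have "real n + 1 \<le> (1 + sqrt (real n))\<^sup>2" by (simp add: power2_eq_square algebra_simps)
  also have "\<dots> \<le> (exp (sqrt (real n)))\<^sup>2"
    using exp_ge_add_one_self[of "sqrt (real n)"] by (intro power_mono) auto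
  also have "\<dots> = exp (2 * sqrt (real n))" by (simp add: power2_eq_square exp_add[symmetric])
  finally show ?thesis .
qed

text \<open>Deleting a vertex of minimum degree and recording its neighbourhood: the exponential bound
  on the number of possible links is paid once per vertex.\<close>
lemma card_codegree_graphs_le:
  assumes "finite V"
  shows "real (card (codegree_graphs K V)) \<le> exp ((14406 + 2 * real K) * card V * sqrt (card V))"
  using assms
proof (induction "card V" arbitrary: V)
  case 0
  then have "codegree_graphs K V \<subseteq> {{}}" unfolding codegree_graphs_def by auto
  then have "card (codegree_graphs K V) \<le> card {{} :: 'a set set}" by (intro card_mono) auto
  then show ?case using "0.hyps" by simp
next
  case (Suc n)
  define C where "C = 14406 + 2 * real K"
  have "V \<noteq> {}" using Suc.hyps(2) by auto
  have card_delete: "card (V - {v}) = n" if "v \<in> V" for v using Suc.hyps(2) that by simp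
  have "real (card (codegree_graphs K V))
      \<le> (\<Sum>v\<in>V. \<Sum>E'\<in>codegree_graphs K (V - {v}). real (card (possible_links E' (V - {v}))))"
  proof -
    have "real (card (codegree_graphs K V))
        \<le> real (\<Sum>v\<in>V. \<Sum>E'\<in>codegree_graphs K (V - {v}). card (possible_links E' (V - {v})))"
      using card_codegree_graphs_le_sum_links[OF Suc.prems \<open>V \<noteq> {}\<close>, of K] by (simp only: of_nat_le_iff)
    then show ?thesis by simp
  qed
  also have "\<dots> \<le> (\<Sum>v\<in>V. exp (C * n * sqrt n) * exp ((C - 2) * sqrt n))"
  proof (intro sum_mono)
    fix v assume "v \<in> V"
    have "(\<Sum>E'\<in>codegree_graphs K (V - {v}). real (card (possible_links E' (V - {v}))))
        \<le> (\<Sum>E'\<in>codegree_graphs K (V - {v}). exp ((C - 2) * sqrt n))"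
      using card_possible_links_le[of _ K "V - {v}"] Suc.prems card_delete[OF \<open>v \<in> V\<close>]
      unfolding C_def by (intro sum_mono) simp
    also have "\<dots> \<le> exp (C * n * sqrt n) * exp ((C - 2) * sqrt n)"
      using Suc.hyps(1)[of "V - {v}"] Suc.prems card_delete[OF \<open>v \<in> V\<close>] unfolding C_def by simp
    finally show "(\<Sum>E'\<in>codegree_graphs K (V - {v}). real (card (possible_links E' (V - {v}))))
        \<le> exp (C * n * sqrt n) * exp ((C - 2) * sqrt n)" .
  qed
  also have "\<dots> \<le> exp (2 * sqrt n) * exp (C * n * sqrt n) * exp ((C - 2) * sqrt n)"
    using plus_one_le_exp_two_sqrt[of n] Suc.hyps(2) by (simp add: mult_right_mono)
  also have "\<dots> = exp (C * (n + 1) * sqrt n)" by (simp add: exp_add[symmetric] algebra_simps)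
  also have "\<dots> \<le> exp (C * card V * sqrt (card V))"
    using Suc.hyps(2) unfolding C_def by (simp add: mult_left_mono)
  finally show ?case unfolding C_def .
qed

lemma powr_three_halves: "x powr (3 / 2) = x * sqrt x" if "0 \<le> x" for x :: real
proof -
  have "x powr (3 / 2) = x powr (1 + 1 / 2)" by simp
  also have "\<dots> = x powr 1 * x powr (1 / 2)" by (rule powr_add)
  also have "\<dots> = x * sqrt x" using that by (simp add: powr_half_sqrt)
  finally show ?thesis .
qed

theorem theorem1p8:
  fixes r :: nat
  assumes "r \<ge> 2"
  shows "\<exists>c::real. \<forall>n::nat.
    real (card {H :: nat set set. H \<subseteq> Pow {..<n} \<and> uniform r H \<and> girth_ge_5 H})
      \<le> 2 powr (c * real n powr (3/2))"
proof (intro exI allI)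
  fix n :: nat
  define C where "C = 14406 + 2 * real r"
  let ?Fam = "{H :: nat set set. H \<subseteq> Pow {..<n} \<and> uniform r H \<and> girth_ge_5 H}"
  have "inj_on shadow ?Fam" using inj_on_shadow[OF assms] by (rule inj_on_subset) auto
  moreover have "shadow ` ?Fam \<subseteq> codegree_graphs r {..<n}" using shadow_in_codegree_graphs by blast
  ultimately have "card ?Fam \<le> card (codegree_graphs r {..<n})"
    by (intro card_inj_on_le finite_codegree_graphs) auto
  then have "real (card ?Fam) \<le> exp (C * n * sqrt n)"
    using card_codegree_graphs_le[of "{..<n}" r] unfolding C_def by simp
  also have "\<dots> = 2 powr (C / ln 2 * (n * sqrt n))" by (simp add: powr_def)
  also have "\<dots> = 2 powr (C / ln 2 * real n powr (3/2))" by (simp add: powr_three_halves)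
  finally show "real (card ?Fam) \<le> 2 powr (C / ln 2 * real n powr (3/2))" .
qed

end
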